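(* Consider a connected one-dimensional network of elastoplastic springs as in the context with $\mathrm{rank}(R^\top D)=q$, $q=n-2$, and no spring blocked by the displacement-controlled loadings (so $\dim U=1$). Let $\bar u$ be a fixed nonzero vector of $U$ and define $\bar c^+,\bar c^-\in\mathbb{R}^m$ by $\bar c^+_i=c_i^{\operatorname{sign}(\bar u_i)}$, $\bar c^-_i=c_i^{-\operatorname{sign}(\bar u_i)}$, where $c_i^{-1}:=c_i^-$ and $c_i^{+1}:=c_i^+$. Then for each fixed $t\ge0$, the safe load condition $(C+Ah(t))\cap U^\perp\neq\emptyset$ holds if and only if $$\langle\bar u,\bar c^++Ah(t)\rangle\cdot\langle\bar u,\bar c^-+Ah(t)\rangle\le0.$$
   Context: Spring $k$ joins left node $i_k$ to right node $j_k$; the graph is connected; $D$ is $m\times n$ with $(D\xi)_k=\xi_{j_k}-\xi_{i_k}$. $A=\mathrm{diag}(a_k)$, $a_k>0$; $c_k^-<c_k^+$; $C=\prod_k[c_k^-,c_k^+]$. Displacement-controlled loadings $\xi_{J_k}-\xi_{I_k}=l_k(t)$, incidence vectors $R^k$ with $(R^k)^\top D\xi=\xi_{J_k}-\xi_{I_k}$, $R=(R^1,\dots,R^q)$. Spring $i$ is blocked if the pairs $\{I_k,J_k\}$ contain a chain connecting its two endpoints. $U=\{x\in D\mathbb{R}^n:R^\top x=0\}$, $U^\perp$ its Euclidean orthogonal complement, $V=A^{-1}U^\perp$, $P_U$ the projection onto $U$ along $V$; $h(t)=P_UA^{-1}\bar h(t)$ with nodal forces $f(t)=-D^\top\bar h(t)$.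 *)

theory Defs
  imports "HOL-Analysis.Analysis"
begin

text \<open>Nodes are indexed by a finite type 'n, springs by a finite type 'm.
  Spring k joins left node ii k to right node jj k.
  The q displacement-controlled loadings are indexed by k < q (nat), so that q = 0 is allowed.\<close>

definition incidence_matrix :: "('m \<Rightarrow> 'n) \<Rightarrow> ('m \<Rightarrow> 'n) \<Rightarrow> real^'n^'m" where
  "incidence_matrix ii jj = (\<chi> k l. (if l = jj k then 1 else 0) - (if l = ii k then 1 else 0))"

definition diag_matrix :: "real^'m \<Rightarrow> real^'m^'m" where
  "diag_matrix a = (\<chi> i j. if i = j then a $ i else 0)"

definition graph_connected :: "('m \<Rightarrow> 'n) \<Rightarrow> ('m \<Rightarrow> 'n) \<Rightarrow> bool" where
  "graph_connected ii jj \<longleftrightarrow>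
     (\<forall>a b. (a, b) \<in> ({(ii k, jj k) | k. True} \<union> {(jj k, ii k) | k. True})\<^sup>*)"

definition spring_blocked ::
  "('m \<Rightarrow> 'n) \<Rightarrow> ('m \<Rightarrow> 'n) \<Rightarrow> nat \<Rightarrow> (nat \<Rightarrow> 'n) \<Rightarrow> (nat \<Rightarrow> 'n) \<Rightarrow> 'm \<Rightarrow> bool" where
  "spring_blocked ii jj q I J e \<longleftrightarrow>
     (ii e, jj e) \<in> ({(I k, J k) | k. k < q} \<union> {(J k, I k) | k. k < q})\<^sup>*"

text \<open>rank(R^T D): the dimension of the row space of the q x n matrix R^T D,
  whose k-th row is D^T R^k.\<close>
definition rank_RtD :: "real^'n^'m \<Rightarrow> nat \<Rightarrow> (nat \<Rightarrow> real^'m) \<Rightarrow> nat" where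
  "rank_RtD D q R = dim {transpose D *v R k | k. k < q}"

definition subspace_U :: "real^'n^'m \<Rightarrow> nat \<Rightarrow> (nat \<Rightarrow> real^'m) \<Rightarrow> (real^'m) set" where
  "subspace_U D q R = {x. x \<in> range (\<lambda>\<xi>. D *v \<xi>) \<and> (\<forall>k<q. R k \<bullet> x = 0)}"

definition proj_along :: "'a::real_vector set \<Rightarrow> 'a set \<Rightarrow> 'a \<Rightarrow> 'a" where
  "proj_along U V x = (THE u. u \<in> U \<and> x - u \<in> V)"

text \<open>c_i^{s} for s = sign: c_i^{-1} = c_i^-, c_i^{+1} = c_i^+.  (For s = 0, which only
  occurs where the weighting component of u-bar vanishes, we choose c_i^+; the choice is irrelevant.)\<close>
definition c_sign :: "real^'m \<Rightarrow> real^'m \<Rightarrow> real \<Rightarrow> 'm \<Rightarrow> real" where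
  "c_sign cm cp s i = (if s = -1 then cm $ i else cp $ i)"

end

theory Submission
  imports Defs
begin

text \<open>Since R^T D has rank n - 2, its kernel is a plane; it contains the constant
  displacements, which D annihilates, so U = D(ker R^T D) is the line spanned by ubar and the
  orthogonal complement of U is the hyperplane orthogonal to ubar. The safe load condition thus
  asks whether the linear functional c \<mapsto> ubar \<bullet> (c + A h(t)) vanishes somewhere on the
  box C. On C it is smallest at the corner cbm and largest at the corner cbp, and since C is
  connected it vanishes on C iff these two extreme values have opposite signs.\<close>

lemma incidence_matrix_mult_vec:
  "(incidence_matrix ii jj *v x) $ k = x $ jj k - x $ ii k"
  by (simp add: incidence_matrix_def matrix_vector_mult_def left_diff_distrib sum_subtractf
      if_distrib[of "\<lambda>a. a * _"] cong: if_cong)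

lemma incidence_matrix_mult_const: "incidence_matrix ii jj *v (\<chi> i. c) = 0"
  by (simp add: vec_eq_iff incidence_matrix_mult_vec)

lemma dim_kernel_add_rank_RtD:
  fixes D :: "real^'n::finite^'m::finite"
  shows "dim {\<xi>. \<forall>k<q. R k \<bullet> (D *v \<xi>) = 0} + rank_RtD D q R = CARD('n)"
proof -
  define W where "W = {transpose D *v R k | k. k < q}"
  have "{\<xi>. \<forall>k<q. R k \<bullet> (D *v \<xi>) = 0} = {\<xi>. \<forall>w \<in> W. orthogonal w \<xi>}"
    by (auto simp: W_def orthogonal_def dot_lmul_matrix[symmetric])
  also have "\<dots> = {\<xi> \<in> UNIV. \<forall>w \<in> span W. orthogonal w \<xi>}"
  proof (intro set_eqI iffI)
    fix \<xi> assume "\<xi> \<in> {\<xi>. \<forall>w \<in> W. orthogonal w \<xi>}"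
    then show "\<xi> \<in> {\<xi> \<in> UNIV. \<forall>w \<in> span W. orthogonal w \<xi>}"
      using orthogonal_to_span[of _ W \<xi>] by (simp add: orthogonal_commute)
  qed (auto intro: span_base)
  finally have "dim {\<xi>. \<forall>k<q. R k \<bullet> (D *v \<xi>) = 0} + dim (span W) = dim (UNIV :: (real^'n) set)"
    using dim_subspace_orthogonal_to_vectors[of "span W" UNIV] by simp
  then show ?thesis by (simp add: rank_RtD_def W_def)
qed

lemma linear_image_collinear:
  fixes f :: "'a::euclidean_space \<Rightarrow> 'b::real_vector"
  assumes "linear f" "subspace S" "dim S \<le> 2"
    and "z \<in> S" "z \<noteq> 0" "f z = 0" "x0 \<in> S" "f x0 \<noteq> 0" "x \<in> S"
  shows "\<exists>k. f x = k *\<^sub>R f x0"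
proof -
  have "x0 \<notin> span {z}"
    using assms(1,6,8) by (auto simp: span_singleton linear_scale)
  then have indep: "independent {x0, z}"
    using assms(5) by (simp add: independent_insert)
  moreover have "x0 \<noteq> z" using assms(6,8) by auto
  moreover have "card {x0, z} \<le> dim S"
    using independent_card_le_dim[of "{x0, z}" S] indep assms(4,7) by simp
  ultimately have "S \<subseteq> span {x0, z}"
    using card_eq_dim[of "{x0, z}" S] assms(3,4,7) by simp
  then obtain a b where "x - a *\<^sub>R x0 = b *\<^sub>R z"
    using assms(9) by (auto simp: span_insert span_singleton)
  then have "f x = a *\<^sub>R f x0"
    using assms(1,6) by (simp add: diff_eq_eq linear_add linear_scale)
  then show ?thesis ..
qed

lemma subspace_U_collinear:
  fixes ii jj :: "'m::finite \<Rightarrow> 'n::finite"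
  assumes rank: "CARD('n) \<le> rank_RtD (incidence_matrix ii jj) q R + 2"
    and "u0 \<in> subspace_U (incidence_matrix ii jj) q R" "u0 \<noteq> 0"
    and "u \<in> subspace_U (incidence_matrix ii jj) q R"
  shows "\<exists>k. u = k *\<^sub>R u0"
proof -
  let ?D = "incidence_matrix ii jj"
  define S where "S = {\<xi>. \<forall>k<q. R k \<bullet> (?D *v \<xi>) = 0}"
  have U_eq: "subspace_U ?D q R = (\<lambda>\<xi>. ?D *v \<xi>) ` S"
    by (auto simp: subspace_U_def S_def)
  have "subspace S"
    by (auto simp: S_def subspace_def matrix_vector_right_distrib matrix_vector_mult_scaleR
        inner_add_right)
  moreover have "dim S \<le> 2"
    using dim_kernel_add_rank_RtD[of q R ?D] rank by (simp add: S_def)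
  moreover have "(\<chi> i. 1) \<in> S" "?D *v (\<chi> i. 1) = 0"
    by (simp_all add: S_def incidence_matrix_mult_const)
  moreover have "(\<chi> i. 1) \<noteq> (0 :: real^'n)"
    by (simp add: vec_eq_iff)
  moreover obtain \<xi>0 \<xi> where "\<xi>0 \<in> S" "u0 = ?D *v \<xi>0" "\<xi> \<in> S" "u = ?D *v \<xi>"
    using assms(2,4) unfolding U_eq by blast
  ultimately show ?thesis
    using linear_image_collinear[of "\<lambda>\<xi>. ?D *v \<xi>" S "\<chi> i. 1" \<xi>0 \<xi>] assms(3)
    by (simp add: matrix_vector_mul_linear)
qed

lemma orthogonal_comp_collinear:
  fixes u :: "'a::real_inner"
  assumes "u \<in> U" "\<And>v. v \<in> U \<Longrightarrow> \<exists>k. v = k *\<^sub>R u"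
  shows "orthogonal_comp U = {x. u \<bullet> x = 0}"
  using assms by (fastforce simp: orthogonal_comp_def orthogonal_def)

lemma c_sign_corner_mem_cbox:
  assumes "\<forall>i. cm $ i \<le> cp $ i"
  shows "(\<chi> i. c_sign cm cp (s i) i) \<in> cbox cm cp"
  using assms by (simp add: mem_box_cart c_sign_def)

lemma inner_c_sign_corner_bounds:
  assumes "c \<in> cbox cm cp"
  shows "u \<bullet> (\<chi> i. c_sign cm cp (- sgn (u $ i)) i) \<le> u \<bullet> c"
    and "u \<bullet> c \<le> u \<bullet> (\<chi> i. c_sign cm cp (sgn (u $ i)) i)"
  using assms unfolding inner_vec_def inner_real_def mem_box_cart
  by (auto intro!: sum_mono simp: c_sign_def sgn_real_def mult_left_mono mult_left_mono_neg)

lemma inner_eq_on_cbox_iff: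
  assumes "\<forall>i. cm $ i \<le> cp $ i"
  shows "(\<exists>c \<in> cbox cm cp. u \<bullet> c = b) \<longleftrightarrow>
    u \<bullet> (\<chi> i. c_sign cm cp (- sgn (u $ i)) i) \<le> b \<and> b \<le> u \<bullet> (\<chi> i. c_sign cm cp (sgn (u $ i)) i)"
  using inner_c_sign_corner_bounds[of _ cm cp u]
    connected_ivt_hyperplane[OF convex_connected[OF convex_box(1)]
      c_sign_corner_mem_cbox[OF assms] c_sign_corner_mem_cbox[OF assms]]
  by fastforce

theorem proposition2:
  fixes ii jj :: "'m::finite \<Rightarrow> 'n::finite"
    and a cm cp :: "real^'m"
    and q :: nat
    and I J :: "nat \<Rightarrow> 'n"
    and R :: "nat \<Rightarrow> real^'m"
    and hbar :: "real \<Rightarrow> real^'m"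
    and ubar :: "real^'m"
    and t :: real
    and D :: "real^'n^'m" and A :: "real^'m^'m" and C U V :: "(real^'m) set"
    and h :: "real \<Rightarrow> real^'m" and cbp cbm :: "real^'m"
  assumes D_def: "D = incidence_matrix ii jj"
    and A_def: "A = diag_matrix a"
    and C_def: "C = {c :: real^'m. \<forall>i. cm $ i \<le> c $ i \<and> c $ i \<le> cp $ i}"
    and U_def: "U = subspace_U D q R"
    and V_def: "V = {matrix_inv A *v y | y. y \<in> orthogonal_comp U}"
    and h_def: "h = (\<lambda>s. proj_along U V (matrix_inv A *v hbar s))"
    and cbp_def: "cbp = (\<chi> i. c_sign cm cp (sgn (ubar $ i)) i)"
    and cbm_def: "cbm = (\<chi> i. c_sign cm cp (- sgn (ubar $ i)) i)"
    and conn: "graph_connected ii jj"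
    and apos: "\<forall>i. a $ i > 0"
    and cless: "\<forall>i. cm $ i < cp $ i"
    and incid: "\<forall>k<q. \<forall>\<xi>. R k \<bullet> (D *v \<xi>) = \<xi> $ J k - \<xi> $ I k"
    and qdef: "int q = int CARD('n) - 2"
    and rank: "rank_RtD D q R = q"
    and unblocked: "\<forall>e. \<not> spring_blocked ii jj q I J e"
    and ubarU: "ubar \<in> U" and ubar_nz: "ubar \<noteq> 0"
    and t: "t \<ge> 0"
  shows "((\<lambda>c. c + A *v h t) ` C) \<inter> orthogonal_comp U \<noteq> {}
     \<longleftrightarrow> (ubar \<bullet> (cbp + A *v h t)) * (ubar \<bullet> (cbm + A *v h t)) \<le> 0"
proof -
  have cm_le_cp: "\<forall>i. cm $ i \<le> cp $ i"
    using cless by (simp add: less_imp_le)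
  have card_le: "CARD('n) \<le> rank_RtD (incidence_matrix ii jj) q R + 2"
    using qdef rank D_def by simp
  have "\<exists>k. u = k *\<^sub>R ubar" if "u \<in> U" for u
    using ubarU ubar_nz that unfolding U_def D_def by (rule subspace_U_collinear[OF card_le])
  with ubarU have orth: "orthogonal_comp U = {x. ubar \<bullet> x = 0}"
    by (rule orthogonal_comp_collinear)
  have box: "C = cbox cm cp"
    by (auto simp: C_def mem_box_cart)
  define w where "w = A *v h t"
  have "((\<lambda>c. c + w) ` C) \<inter> orthogonal_comp U \<noteq> {} \<longleftrightarrow>
      (\<exists>c \<in> cbox cm cp. ubar \<bullet> c = - (ubar \<bullet> w))"
    unfolding orth box by (auto simp: inner_add_right eq_neg_iff_add_eq_0)
  also have "\<dots> \<longleftrightarrow> ubar \<bullet> (cbm + w) \<le> 0 \<and> 0 \<le> ubar \<bullet> (cbp + w)"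
    using inner_eq_on_cbox_iff[OF cm_le_cp, of ubar "- (ubar \<bullet> w)"]
    unfolding cbm_def cbp_def by (auto simp: inner_add_right)
  also have "\<dots> \<longleftrightarrow> (ubar \<bullet> (cbp + w)) * (ubar \<bullet> (cbm + w)) \<le> 0"
  proof -
    have "cbm \<in> cbox cm cp"
      unfolding cbm_def by (rule c_sign_corner_mem_cbox[OF cm_le_cp])
    then have "ubar \<bullet> cbm \<le> ubar \<bullet> cbp"
      unfolding cbp_def by (rule inner_c_sign_corner_bounds(2))
    then show ?thesis
      by (auto simp: inner_add_right mult_le_0_iff)
  qed
  finally show ?thesis
    unfolding w_def .
qed

end
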